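(* Let $M\ge K\ge 2$ be integers and let $P_u>\frac{1}{M-1}$. Then $$K\log_2\!\left(1+\frac{P_uM}{P_u(K-1)+1}\right)\ge K\log_2\!\left(1+P_u(M-K+1)\right)$$ if and only if $K\ge K_{\mathrm{cross,UL}}:=M+1-\dfrac{1}{P_u}$.
   Context: The left-hand side is the paper's closed-form low-SNR ergodic uplink sum-rate expression for maximum ratio combining and the right-hand side that for zero-forcing reception, with $M$ base-station antennas, $K$ single-antenna users and per-user transmit power $P_u$ (unit noise variance). The lemma states that MRC gives the better sum rate exactly when the number of users is at least $K_{\mathrm{cross,UL}}$. *)

theory Defs
  imports Complex_Main
begin

definition K_cross_UL :: "nat \<Rightarrow> real \<Rightarrow> real" where
  "K_cross_UL M P_u = real M + 1 - 1 / P_u"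

end

theory Submission
  imports Defs
begin

text \<open>Since \<open>K \<cdot> log\<^sub>2(1 + \<cdot>)\<close> is strictly increasing, the comparison of sum rates is a
  comparison of the per-user SINRs \<open>P M / (P (K - 1) + 1)\<close> and \<open>P (M - K + 1)\<close>.\<close>

lemma zf_sinr_le_mrc_sinr_iff:
  fixes P M K :: real
  assumes "P > 0" and "K > 1"
  shows "P * (M - K + 1) \<le> P * M / (P * (K - 1) + 1) \<longleftrightarrow> (M - K + 1) * P \<le> 1"
proof -
  have den: "P * (K - 1) + 1 > 0"
    using assms by (simp add: add_pos_pos)
  have "P * (M - K + 1) \<le> P * M / (P * (K - 1) + 1)
          \<longleftrightarrow> (M - K + 1) * (P * (K - 1) + 1) \<le> M"
    using assms(1) den by (simp add: pos_le_divide_eq mult.assoc)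
  also have "\<dots> \<longleftrightarrow> ((M - K + 1) * P) * (K - 1) \<le> 1 * (K - 1)"
    by (simp add: algebra_simps)
  also have "\<dots> \<longleftrightarrow> (M - K + 1) * P \<le> 1"
    using assms(2) by (simp only: mult_le_cancel_right_pos diff_gt_0_iff_gt)
  finally show ?thesis .
qed

lemma K_cross_UL_le_iff:
  assumes "P_u > 0"
  shows "K_cross_UL M P_u \<le> K \<longleftrightarrow> (real M - K + 1) * P_u \<le> 1"
  using assms unfolding K_cross_UL_def by (simp add: field_simps)

theorem lemma10:
  fixes M K :: nat and P_u :: real
  assumes "M \<ge> K" and "K \<ge> 2" and "P_u > 1 / (real M - 1)"
  shows "real K * log 2 (1 + P_u * real M / (P_u * (real K - 1) + 1))
           \<ge> real K * log 2 (1 + P_u * (real M - real K + 1))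
         \<longleftrightarrow> real K \<ge> K_cross_UL M P_u"
proof -
  have K: "real K > 1" and MK: "real M - real K + 1 > 0"
    using assms(1,2) by auto
  have P: "P_u > 0"
    using assms(3) MK K less_trans[of 0 "1 / (real M - 1)" P_u] by simp
  have "0 < 1 + P_u * (real M - real K + 1)"
    using P MK by (simp add: add_pos_pos)
  moreover have "0 < 1 + P_u * real M / (P_u * (real K - 1) + 1)"
    using P K by (simp add: add_pos_nonneg)
  ultimately show ?thesis
    using K P by (simp add: zf_sinr_le_mrc_sinr_iff K_cross_UL_le_iff)
qed

end
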